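(* For all $f,g\in I\cdot\mathrm{Mult}[[B]]=\{I\cdot F: F\in\mathrm{Mult}[[B]]\}$, $$f\boxtimes g=(f\boxtimes_1 g)\cdot(f\boxtimes_2 g),\qquad g\,\underline\boxtimes\,f=(f\boxtimes_2 g)\cdot(f\boxtimes_1 g).$$
   Context: $B$ is a unital algebra over a field $\mathbb K$ of characteristic zero. $\mathrm{Mult}[[B]]$: sequences $f=(f_n)_{n\ge0}$ of multilinear maps $f_n:B^n\to B$. Product $(f\cdot g)_n(x_1,\dots,x_n)=\sum_{k=0}^n f_k(x_1,\dots,x_k)g_{n-k}(x_{k+1},\dots,x_n)$; $I=(\delta_{n,1}\mathrm{id}_B)$, so $(I\cdot F)_n(x_1,\dots,x_n)=x_1F_{n-1}(x_2,\dots,x_n)$, $(I\cdot F)_0=0$. Planar binary trees: $Y_0=\{|\}$, $Y_n=\{\sigma\vee\tau:\sigma\in Y_k,\tau\in Y_l,k+l=n-1\}$ ($\sigma\vee\tau$: root with left subtree $\sigma$, right subtree $\tau$); each $\tau\in Y_n$, $n\ge1$, is uniquely $\tau_1\vee(\tau_2\vee(\cdots\vee(\tau_k\vee|)))$; $j_i=|\tau_1|+\dots+|\tau_i|+i$. For $f,g\in\mathrm{Mult}[[B]]$: $(f\cup g)_|=1$, $(f\cup g)_\tau(x_1,\dots,x_n)=g_k((g\cup f)_{\tau_1}(x_1,\dots,x_{j_1-1})x_{j_1},\dots,(g\cup f)_{\tau_k}(x_{j_{k-1}+1},\dots,x_{j_k-1})x_{j_k})$. $R:Y\to Y$: $R(|)=|$,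 $R(\sigma\vee\tau)=(|\vee R(\sigma))\vee R(\tau)$. Boxed convolutions (for $n\ge1$): $(f\boxtimes g)_n(x_1,\dots,x_n)=\sum_{\tau\in Y_n}(f\cup g)_{R(\tau)}(x_1,1,x_2,1,\dots,x_n,1)$, $(f\boxtimes g)_0=g_0$; $(f\underline\boxtimes g)_n(x_1,\dots,x_n)=\sum_{\tau\in Y_n}(f\cup g)_{R(\tau)}(1,x_1,1,x_2,\dots,1,x_n)$, $(f\underline\boxtimes g)_0=g_0$; $(f\boxtimes_1 g)_n(x_1,\dots,x_n)=\sum_{\tau\in Y_{n-1}}(g\cup f)_{|\vee R(\tau)}(x_1,1,x_2,1,\dots,1,x_n)$, $(f\boxtimes_1 g)_0=0$; $(f\boxtimes_2 g)_n(x_1,\dots,x_n)=\sum_{\tau\in Y_n}(f\cup g)_{|\vee R(\tau)}(1,x_1,1,x_2,\dots,1,x_n,1)$, $(f\boxtimes_2 g)_0=g_1(1)$. *)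

theory Defs
  imports Main
begin

definition is_algebra :: "('k::field_char_0 \<Rightarrow> 'b::ring_1 \<Rightarrow> 'b) \<Rightarrow> bool" where
  "is_algebra scal \<longleftrightarrow>
     (\<forall>a x y. scal a (x + y) = scal a x + scal a y) \<and>
     (\<forall>a b x. scal (a + b) x = scal a x + scal b x) \<and>
     (\<forall>a b x. scal a (scal b x) = scal (a * b) x) \<and>
     (\<forall>x. scal 1 x = x) \<and>
     (\<forall>a x y. scal a (x * y) = scal a x * y) \<and>
     (\<forall>a x y. scal a (x * y) = x * scal a y)"

text \<open>An element f of Mult[[B]] is represented as a function on lists:
 f_n(x_1,...,x_n) = f [x_1,...,x_n], so the arity is the length of the list.\<close>

definition Mult :: "('k::field_char_0 \<Rightarrow> 'b::ring_1 \<Rightarrow> 'b) \<Rightarrow> ('b list \<Rightarrow> 'b) set" where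
  "Mult scal = {F. \<forall>xs i a b c. i < length xs \<longrightarrow>
      F (xs[i := a + b]) = F (xs[i := a]) + F (xs[i := b]) \<and>
      F (xs[i := scal c a]) = scal c (F (xs[i := a]))}"

definition mprod :: "('b::ring_1 list \<Rightarrow> 'b) \<Rightarrow> ('b list \<Rightarrow> 'b) \<Rightarrow> 'b list \<Rightarrow> 'b" where
  "mprod f g xs = (\<Sum>k = 0..length xs. f (take k xs) * g (drop k xs))"

definition Iop :: "'b::ring_1 list \<Rightarrow> 'b" where
  "Iop xs = (if length xs = 1 then hd xs else 0)"

definition IMult :: "('k::field_char_0 \<Rightarrow> 'b::ring_1 \<Rightarrow> 'b) \<Rightarrow> ('b list \<Rightarrow> 'b) set" where
  "IMult scal = {mprod Iop F | F. F \<in> Mult scal}"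

datatype ptree = Leaf | Node ptree ptree

fun nodes :: "ptree \<Rightarrow> nat" where
  "nodes Leaf = 0"
| "nodes (Node l r) = Suc (nodes l + nodes r)"

definition Y :: "nat \<Rightarrow> ptree set" where
  "Y n = {t. nodes t = n}"

fun Rt :: "ptree \<Rightarrow> ptree" where
  "Rt Leaf = Leaf"
| "Rt (Node s t) = Node (Node Leaf (Rt s)) (Rt t)"

text \<open>cup_args f g tau xs is the argument list of g_k in (f cup g)_tau(xs), where
 tau = tau_1 v (tau_2 v (... v (tau_k v |))): the i-th entry is
 (g cup f)_{tau_i}(block) * x_{j_i}.  (g cup f)_| = 1 and
 (g cup f)_sigma = f_m(cup_args g f sigma ...) for sigma a non-leaf.\<close>
fun cup_args :: "('b::ring_1 list \<Rightarrow> 'b) \<Rightarrow> ('b list \<Rightarrow> 'b) \<Rightarrow> ptree \<Rightarrow> 'b list \<Rightarrow> 'b list" where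
  "cup_args f g Leaf xs = []"
| "cup_args f g (Node l r) xs =
     ((case l of Leaf \<Rightarrow> 1 | Node _ _ \<Rightarrow> f (cup_args g f l (take (nodes l) xs))) * xs ! nodes l)
     # cup_args f g r (drop (Suc (nodes l)) xs)"

definition cup :: "('b::ring_1 list \<Rightarrow> 'b) \<Rightarrow> ('b list \<Rightarrow> 'b) \<Rightarrow> ptree \<Rightarrow> 'b list \<Rightarrow> 'b" where
  "cup f g t xs = (case t of Leaf \<Rightarrow> 1 | Node _ _ \<Rightarrow> g (cup_args f g t xs))"

definition il1 :: "'b::ring_1 list \<Rightarrow> 'b list" where
  "il1 xs = concat (map (\<lambda>x. [x, 1]) xs)"
definition il2 :: "'b::ring_1 list \<Rightarrow> 'b list" where
  "il2 xs = concat (map (\<lambda>x. [1, x]) xs)"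

definition boxtimes :: "('b::ring_1 list \<Rightarrow> 'b) \<Rightarrow> ('b list \<Rightarrow> 'b) \<Rightarrow> 'b list \<Rightarrow> 'b" where
  "boxtimes f g xs = (if xs = [] then g []
     else (\<Sum>\<tau>\<in>Y (length xs). cup f g (Rt \<tau>) (il1 xs)))"

definition uboxtimes :: "('b::ring_1 list \<Rightarrow> 'b) \<Rightarrow> ('b list \<Rightarrow> 'b) \<Rightarrow> 'b list \<Rightarrow> 'b" where
  "uboxtimes f g xs = (if xs = [] then g []
     else (\<Sum>\<tau>\<in>Y (length xs). cup f g (Rt \<tau>) (il2 xs)))"

text \<open>(x_1,1,x_2,1,...,1,x_n) = butlast (il1 xs); (1,x_1,...,1,x_n,1) = il2 xs @ [1]\<close>
definition boxtimes1 :: "('b::ring_1 list \<Rightarrow> 'b) \<Rightarrow> ('b list \<Rightarrow> 'b) \<Rightarrow> 'b list \<Rightarrow> 'b" where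
  "boxtimes1 f g xs = (if xs = [] then 0
     else (\<Sum>\<tau>\<in>Y (length xs - 1). cup g f (Node Leaf (Rt \<tau>)) (butlast (il1 xs))))"

definition boxtimes2 :: "('b::ring_1 list \<Rightarrow> 'b) \<Rightarrow> ('b list \<Rightarrow> 'b) \<Rightarrow> 'b list \<Rightarrow> 'b" where
  "boxtimes2 f g xs = (if xs = [] then g [1]
     else (\<Sum>\<tau>\<in>Y (length xs). cup f g (Node Leaf (Rt \<tau>)) (il2 xs @ [1])))"

end

theory Submission imports Defs begin

text \<open>Write \<open>\<tau> \<in> Y (n+1)\<close> as \<open>\<sigma> \<or> \<rho>\<close> with \<open>\<sigma> \<in> Y m\<close>, \<open>\<rho> \<in> Y (n-m)\<close>. Then
  \<open>R \<tau> = (| \<or> R \<sigma>) \<or> R \<rho>\<close>, so the outermost operator of \<open>(f \<cup> g)\<^sub>R\<^sub>\<tau>\<close> receives as first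
  argument \<open>(g \<cup> f)\<^bsub>| \<or> R \<sigma>\<^esub>\<close> evaluated on the first \<open>2m+1\<close> entries, times the next entry;
  its remaining arguments are those of \<open>(f \<cup> g)\<^sub>R\<^sub>\<rho>\<close> on the rest. If the operator is of
  the form \<open>I \<cdot> G\<close>, the first argument splits off as a factor, and summing over \<open>\<sigma>\<close> and \<open>\<rho>\<close>
  separately gives the \<open>m\<close>-th term of a product in \<open>Mult[[B]]\<close>. With the interleaving
  \<open>(x\<^sub>1,1,\<dots>,x\<^sub>n,1)\<close> the split entry is a \<open>1\<close> and the factors are \<open>\<boxtimes>\<^sub>1\<close> and \<open>\<boxtimes>\<^sub>2\<close>; with
  \<open>(1,x\<^sub>1,\<dots>,1,x\<^sub>n)\<close> it is \<open>x\<^sub>m\<^sub>+\<^sub>1\<close>, which becomes the leading argument of \<open>\<boxtimes>\<^sub>1\<close> and the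
  factors appear in the opposite order.\<close>

lemma Y_0: "Y 0 = {Leaf}"
  unfolding Y_def by (auto elim: nodes.elims)

lemma Y_Suc: "Y (Suc n) = (\<Union>m\<in>{0..n}. (\<lambda>(s, r). Node s r) ` (Y m \<times> Y (n - m)))"
proof safe
  fix t assume "t \<in> Y (Suc n)"
  then obtain s r where "t = Node s r" "nodes s + nodes r = n"
    unfolding Y_def by (cases t) auto
  then show "t \<in> (\<Union>m\<in>{0..n}. (\<lambda>(s, r). Node s r) ` (Y m \<times> Y (n - m)))"
    unfolding Y_def by (auto intro!: bexI[of _ "nodes s"] image_eqI[of _ _ "(s, r)"])
qed (auto simp: Y_def)

lemma finite_Y: "finite (Y n)"
proof (induction n rule: less_induct)
  case (less n)
  then show ?case
    by (cases n) (auto simp: Y_0 Y_Suc)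
qed

lemma sum_Y_Suc:
  "(\<Sum>t\<in>Y (Suc n). h t) = (\<Sum>m=0..n. \<Sum>s\<in>Y m. \<Sum>r\<in>Y (n - m). h (Node s r))"
proof -
  have "(\<Sum>t\<in>Y (Suc n). h t) = (\<Sum>m=0..n. \<Sum>t\<in>(\<lambda>(s, r). Node s r) ` (Y m \<times> Y (n - m)). h t)"
    unfolding Y_Suc
    by (rule sum.UNION_disjoint) (simp, simp add: finite_Y, fastforce simp: Y_def)
  also have "\<dots> = (\<Sum>m=0..n. \<Sum>p\<in>Y m \<times> Y (n - m). h (Node (fst p) (snd p)))"
    by (rule sum.cong[OF refl], subst sum.reindex) (auto simp: inj_on_def case_prod_beta)
  also have "\<dots> = (\<Sum>m=0..n. \<Sum>s\<in>Y m. \<Sum>r\<in>Y (n - m). h (Node s r))"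
    by (rule sum.cong[OF refl], subst sum.cartesian_product) (auto simp: case_prod_beta)
  finally show ?thesis .
qed

lemma sum_Y_Suc_factor:
  fixes h :: "ptree \<Rightarrow> 'a::semiring_0"
  assumes "\<And>s r. nodes s + nodes r = n \<Longrightarrow> h (Node s r) = a (nodes s) s * b (nodes s) r"
  shows "(\<Sum>t\<in>Y (Suc n). h t) = (\<Sum>m=0..n. (\<Sum>s\<in>Y m. a m s) * (\<Sum>r\<in>Y (n - m). b m r))"
  unfolding sum_Y_Suc sum_product
  by (intro sum.cong refl) (auto simp: assms Y_def)

lemma nodes_Rt [simp]: "nodes (Rt t) = 2 * nodes t"
  by (induction t) auto

lemma cup_Node_Leaf:
  "cup f g (Node Leaf t) (x # xs) = g (x # cup_args f g t xs)"
  by (simp add: cup_def)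

lemma cup_Rt_Node:
  "cup f g (Rt (Node s r)) xs =
     g ((cup g f (Node Leaf (Rt s)) (take (Suc (2 * nodes s)) xs) * xs ! Suc (2 * nodes s))
        # cup_args f g (Rt r) (drop (2 * nodes s + 2) xs))"
  by (simp add: cup_def)

lemma il1_Nil [simp]: "il1 [] = []"
  and il1_Cons [simp]: "il1 (x # xs) = x # 1 # il1 xs"
  and il2_Nil [simp]: "il2 [] = []"
  and il2_Cons [simp]: "il2 (x # xs) = 1 # x # il2 xs"
  by (simp_all add: il1_def il2_def)

lemma il1_eq_Nil_iff [simp]: "il1 xs = [] \<longleftrightarrow> xs = []"
  by (cases xs) auto

lemma il2_snoc_1: "il2 xs @ [1] = 1 # il1 xs"
  by (induction xs) auto

lemma butlast_il1_Cons: "butlast (il1 (x # xs)) = x # il2 xs"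
proof -
  have "butlast (1 # il1 xs) = il2 xs" by (induction xs) auto
  then show ?thesis by simp
qed

lemma drop_il1: "drop (2 * m) (il1 xs) = il1 (drop m xs)"
proof (induction m arbitrary: xs)
  case (Suc m) then show ?case by (cases xs) auto
qed simp

lemma drop_il2: "drop (2 * m) (il2 xs) = il2 (drop m xs)"
proof (induction m arbitrary: xs)
  case (Suc m) then show ?case by (cases xs) auto
qed simp

lemma take_il1: "m < length xs \<Longrightarrow> take (Suc (2 * m)) (il1 xs) = butlast (il1 (take (Suc m) xs))"
proof (induction xs arbitrary: m)
  case (Cons x xs) then show ?case by (cases m) (auto simp: numeral_2_eq_2)
qed simp

lemma take_il2: "m < length xs \<Longrightarrow> take (Suc (2 * m)) (il2 xs) = il2 (take m xs) @ [1]"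
proof (induction xs arbitrary: m)
  case (Cons x xs) then show ?case by (cases m) (auto simp: numeral_2_eq_2)
qed simp

lemma nth_il1: "m < length xs \<Longrightarrow> il1 xs ! Suc (2 * m) = 1"
proof (induction xs arbitrary: m)
  case (Cons x xs) then show ?case by (cases m) (auto simp: numeral_2_eq_2)
qed simp

lemma nth_il2: "m < length xs \<Longrightarrow> il2 xs ! Suc (2 * m) = xs ! m"
proof (induction xs arbitrary: m)
  case (Cons x xs) then show ?case by (cases m) (auto simp: numeral_2_eq_2)
qed simp

lemma mprod_Iop_Cons [simp]: "mprod Iop F (x # xs) = x * F xs"
proof -
  have "mprod Iop F (x # xs) = (\<Sum>k=0..length (x # xs). if k = 1 then x * F xs else 0)"
    unfolding mprod_def
    by (rule sum.cong[OF refl]) (use le0 in \<open>auto simp: Iop_def min_def Suc_le_eq\<close>)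
  also have "\<dots> = x * F xs"
    by (subst sum.delta) auto
  finally show ?thesis .
qed

lemma boxtimes1_Nil [simp]: "boxtimes1 f g [] = 0"
  by (simp add: boxtimes1_def)

lemma boxtimes1_Cons:
  assumes "f = mprod Iop F"
  shows "boxtimes1 f g (x # xs) = x * (\<Sum>\<rho>\<in>Y (length xs). F (cup_args g f (Rt \<rho>) (il2 xs)))"
  by (simp del: il1_Cons add: boxtimes1_def butlast_il1_Cons cup_Node_Leaf assms sum_distrib_left)

lemma boxtimes2_eq_sum:
  "boxtimes2 f g xs = (\<Sum>\<sigma>\<in>Y (length xs). cup f g (Node Leaf (Rt \<sigma>)) (il2 xs @ [1]))"
  by (simp add: boxtimes2_def Y_0 cup_def)

lemma boxtimes2_eq:
  assumes "g = mprod Iop G"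
  shows "boxtimes2 f g xs = (\<Sum>\<rho>\<in>Y (length xs). G (cup_args f g (Rt \<rho>) (il1 xs)))"
  by (simp add: boxtimes2_eq_sum il2_snoc_1 cup_Node_Leaf assms)

lemma boxtimes_factorization:
  assumes g: "g = mprod Iop G"
  shows "boxtimes f g xs = mprod (boxtimes1 f g) (boxtimes2 f g) xs"
proof (cases "xs = []")
  case True
  then show ?thesis by (simp add: boxtimes_def mprod_def Iop_def g)
next
  case False
  then obtain n where len: "length xs = Suc n"
    by (metis length_0_conv not0_implies_Suc)
  have "boxtimes f g xs = (\<Sum>t\<in>Y (Suc n). cup f g (Rt t) (il1 xs))"
    by (simp add: boxtimes_def False len)
  also have "\<dots> = (\<Sum>m=0..n. (\<Sum>s\<in>Y m. cup g f (Node Leaf (Rt s)) (butlast (il1 (take (Suc m) xs))))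
                      * (\<Sum>r\<in>Y (n - m). G (cup_args f g (Rt r) (il1 (drop (Suc m) xs)))))"
  proof (rule sum_Y_Suc_factor)
    fix s r assume "nodes s + nodes r = n"
    then have "nodes s < length xs" by (simp add: len)
    then show "cup f g (Rt (Node s r)) (il1 xs) =
        cup g f (Node Leaf (Rt s)) (butlast (il1 (take (Suc (nodes s)) xs)))
        * G (cup_args f g (Rt r) (il1 (drop (Suc (nodes s)) xs)))"
      using drop_il1[of "Suc (nodes s)" xs]
      unfolding cup_Rt_Node by (simp add: take_il1 nth_il1 g)
  qed
  also have "\<dots> = (\<Sum>m=0..n. boxtimes1 f g (take (Suc m) xs) * boxtimes2 f g (drop (Suc m) xs))"
    using len by (intro sum.cong refl) (auto simp: boxtimes1_def boxtimes2_eq[OF g] min_def)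
  also have "\<dots> = mprod (boxtimes1 f g) (boxtimes2 f g) xs"
    unfolding mprod_def len sum.atLeast0_atMost_Suc_shift by simp
  finally show ?thesis .
qed

lemma uboxtimes_factorization:
  assumes f: "f = mprod Iop F"
  shows "uboxtimes g f xs = mprod (boxtimes2 f g) (boxtimes1 f g) xs"
proof (cases "xs = []")
  case True
  then show ?thesis by (simp add: uboxtimes_def mprod_def Iop_def f)
next
  case False
  then obtain n where len: "length xs = Suc n"
    by (metis length_0_conv not0_implies_Suc)
  have "uboxtimes g f xs = (\<Sum>t\<in>Y (Suc n). cup g f (Rt t) (il2 xs))"
    by (simp add: uboxtimes_def False len)
  also have "\<dots> = (\<Sum>m=0..n. (\<Sum>s\<in>Y m. cup f g (Node Leaf (Rt s)) (il2 (take m xs) @ [1]))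
                      * (\<Sum>r\<in>Y (n - m). xs ! m * F (cup_args g f (Rt r) (il2 (drop (Suc m) xs)))))"
  proof (rule sum_Y_Suc_factor)
    fix s r assume "nodes s + nodes r = n"
    then have "nodes s < length xs" by (simp add: len)
    then show "cup g f (Rt (Node s r)) (il2 xs) =
        cup f g (Node Leaf (Rt s)) (il2 (take (nodes s) xs) @ [1])
        * (xs ! nodes s * F (cup_args g f (Rt r) (il2 (drop (Suc (nodes s)) xs))))"
      using drop_il2[of "Suc (nodes s)" xs]
      unfolding cup_Rt_Node by (simp add: take_il2 nth_il2 f mult.assoc)
  qed
  also have "\<dots> = (\<Sum>m=0..n. boxtimes2 f g (take m xs) * boxtimes1 f g (drop m xs))"
    using len by (intro sum.cong refl)
      (auto simp: boxtimes2_eq_sum boxtimes1_Cons[OF f] Cons_nth_drop_Suc[symmetric] min_def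
        sum_distrib_left)
  also have "\<dots> = mprod (boxtimes2 f g) (boxtimes1 f g) xs"
    unfolding mprod_def len by (simp add: sum.atLeast0_atMost_Suc len)
  finally show ?thesis .
qed

theorem lemma3:
  fixes scal :: "'k::field_char_0 \<Rightarrow> 'b::ring_1 \<Rightarrow> 'b"
    and f g :: "'b list \<Rightarrow> 'b"
  assumes "is_algebra scal"
    and "f \<in> IMult scal" and "g \<in> IMult scal"
  shows "boxtimes f g = mprod (boxtimes1 f g) (boxtimes2 f g)
     \<and> uboxtimes g f = mprod (boxtimes2 f g) (boxtimes1 f g)"
proof -
  obtain F where "f = mprod Iop F" using assms(2) by (auto simp: IMult_def)
  moreover obtain G where "g = mprod Iop G" using assms(3) by (auto simp: IMult_def)
  ultimately show ?thesis
    using boxtimes_factorization uboxtimes_factorization by blast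
qed

end
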